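(* Let $\mathbb{A}$ be a Boolean algebra and $(\mathbb{B},\mu)$ a metric Boolean algebra. Then on $\mathcal{H}(\mathbb{A},\mathbb{B})$ we have $d_{hom}=d_{hom}^{Bor}$, where for $\varphi,\psi\in\mathcal{H}(\mathbb{A},\mathbb{B})$ $d_{hom}(\varphi,\psi)=\sup\{\mu(\varphi(A)\triangle\psi(A))\colon A\in\mathbb{A}\}$ and $d_{hom}^{Bor}(\varphi,\psi)=\sup\{\widehat{\mu}(f_\varphi^{-1}[B]\triangle f_\psi^{-1}[B])\colon B\text{ a Borel subset of }St(\mathbb{A})\}$.
   Context: A metric Boolean algebra $(\mathbb{B},\mu)$ is a Boolean algebra with a strictly positive finitely additive probability measure $\mu$. $\mathcal{H}(\mathbb{A},\mathbb{B})$ is the set of homomorphisms $\mathbb{A}\to\mathbb{B}$. Algebras are identified with the clopen algebras of their Stone spaces $St(\cdot)$; $\widehat{\mu}$ is the unique Radon measure on $St(\mathbb{B})$ extending $\mu$; $f_\varphi\colon St(\mathbb{B})\to St(\mathbb{A})$ is the continuous map $f_\varphi(x)=\varphi^{-1}[x]$. *)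

theory Defs
  imports "HOL-Analysis.Analysis" "HOL-Probability.Probability"
begin

text \<open>Boolean algebras are identified with the clopen algebras of their Stone spaces.\<close>

definition clopens :: "'a topology \<Rightarrow> 'a set set" where
  "clopens X = {U. openin X U \<and> closedin X U}"

definition stone_space :: "'a topology \<Rightarrow> bool" where
  "stone_space X \<longleftrightarrow> compact_space X \<and> Hausdorff_space X \<and>
     (\<forall>U. openin X U \<longrightarrow> (\<forall>x\<in>U. \<exists>V\<in>clopens X. x \<in> V \<and> V \<subseteq> U))"

definition borel_of :: "'a topology \<Rightarrow> 'a measure" where
  "borel_of X = sigma (topspace X) (Collect (openin X))"

definition symdiff :: "'a set \<Rightarrow> 'a set \<Rightarrow> 'a set" where
  "symdiff A B = (A - B) \<union> (B - A)"

text \<open>Boolean homomorphisms Clop(X) -> Clop(Y), i.e. elements of H(A,B).\<close>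
definition ba_hom :: "'a topology \<Rightarrow> 'b topology \<Rightarrow> ('a set \<Rightarrow> 'b set) \<Rightarrow> bool" where
  "ba_hom X Y \<phi> \<longleftrightarrow>
     (\<forall>U\<in>clopens X. \<phi> U \<in> clopens Y) \<and>
     (\<forall>U\<in>clopens X. \<forall>V\<in>clopens X. \<phi> (U \<union> V) = \<phi> U \<union> \<phi> V) \<and>
     (\<forall>U\<in>clopens X. \<phi> (topspace X - U) = topspace Y - \<phi> U)"

definition metric_ba_measure :: "'b topology \<Rightarrow> ('b set \<Rightarrow> real) \<Rightarrow> bool" where
  "metric_ba_measure Y \<mu> \<longleftrightarrow>
     \<mu> (topspace Y) = 1 \<and>
     (\<forall>U\<in>clopens Y. U \<noteq> {} \<longrightarrow> \<mu> U > 0) \<and>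
     (\<forall>U\<in>clopens Y. \<forall>V\<in>clopens Y. U \<inter> V = {} \<longrightarrow> \<mu> (U \<union> V) = \<mu> U + \<mu> V)"

definition radon_extension :: "'b topology \<Rightarrow> ('b set \<Rightarrow> real) \<Rightarrow> 'b measure \<Rightarrow> bool" where
  "radon_extension Y \<mu> M \<longleftrightarrow>
     sets M = sets (borel_of Y) \<and> finite_measure M \<and>
     (\<forall>E\<in>sets M. measure M E = (SUP K\<in>{K. compactin Y K \<and> K \<subseteq> E}. measure M K)) \<and>
     (\<forall>U\<in>clopens Y. measure M U = \<mu> U)"

text \<open>The dual map f_phi : St(B) -> St(A), f_phi(y) = phi^{-1}[y].\<close>
definition stone_map :: "'a topology \<Rightarrow> 'b topology \<Rightarrow> ('a set \<Rightarrow> 'b set) \<Rightarrow> 'b \<Rightarrow> 'a" where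
  "stone_map X Y \<phi> y = (THE x. x \<in> topspace X \<and> (\<forall>U\<in>clopens X. x \<in> U \<longleftrightarrow> y \<in> \<phi> U))"

definition d_hom :: "'a topology \<Rightarrow> ('b set \<Rightarrow> real) \<Rightarrow> ('a set \<Rightarrow> 'b set) \<Rightarrow> ('a set \<Rightarrow> 'b set) \<Rightarrow> real" where
  "d_hom X \<mu> \<phi> \<psi> = (SUP A\<in>clopens X. \<mu> (symdiff (\<phi> A) (\<psi> A)))"

definition d_hom_Bor :: "'a topology \<Rightarrow> 'b topology \<Rightarrow> 'b measure \<Rightarrow> ('a set \<Rightarrow> 'b set) \<Rightarrow> ('a set \<Rightarrow> 'b set) \<Rightarrow> real" where
  "d_hom_Bor X Y M \<phi> \<psi> = (SUP B\<in>sets (borel_of X).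
      measure M (symdiff {y\<in>topspace Y. stone_map X Y \<phi> y \<in> B} {y\<in>topspace Y. stone_map X Y \<psi> y \<in> B}))"

end

theory Submission
  imports Defs
begin

text \<open>
  A homomorphism \<open>\<phi>\<close> is dual to the continuous map \<open>f\<^sub>\<phi> = stone_map X Y \<phi>\<close>, and
  \<open>f\<^sub>\<phi>\<^sup>-\<^sup>1[A] = \<phi> A\<close> for clopen \<open>A\<close>; so \<open>d_hom\<close> is the supremum over the clopen sets of the
  very quantity whose supremum over all Borel sets is \<open>d_hom_Bor\<close>, which gives one inequality.
  Conversely, given a Borel set \<open>B\<close>, inner regularity yields compact sets
  \<open>K \<subseteq> f\<^sub>\<phi>\<^sup>-\<^sup>1[B] - f\<^sub>\<psi>\<^sup>-\<^sup>1[B]\<close> and \<open>L \<subseteq> f\<^sub>\<psi>\<^sup>-\<^sup>1[B] - f\<^sub>\<phi>\<^sup>-\<^sup>1[B]\<close> of almost full measure.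
  The compact sets \<open>f\<^sub>\<phi>[K] \<union> f\<^sub>\<psi>[L] \<subseteq> B\<close> and \<open>f\<^sub>\<psi>[K] \<union> f\<^sub>\<phi>[L]\<close>, disjoint from \<open>B\<close>, are
  separated by a clopen set \<open>A\<close> of the Stone space, and then \<open>K \<union> L \<subseteq> \<phi> A \<triangle> \<psi> A\<close>.
\<close>

lemma clopens_subset_topspace: "U \<in> clopens X \<Longrightarrow> U \<subseteq> topspace X"
  by (simp add: clopens_def openin_subset)

lemma clopens_empty: "{} \<in> clopens X"
  and clopens_topspace: "topspace X \<in> clopens X"
  by (auto simp: clopens_def)

lemma clopens_Un: "U \<in> clopens X \<Longrightarrow> V \<in> clopens X \<Longrightarrow> U \<union> V \<in> clopens X"
  and clopens_Int: "U \<in> clopens X \<Longrightarrow> V \<in> clopens X \<Longrightarrow> U \<inter> V \<in> clopens X"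
  and clopens_Diff: "U \<in> clopens X \<Longrightarrow> V \<in> clopens X \<Longrightarrow> U - V \<in> clopens X"
  by (auto simp: clopens_def)

lemma clopens_topspace_Diff: "U \<in> clopens X \<Longrightarrow> topspace X - U \<in> clopens X"
  by (simp add: clopens_Diff clopens_topspace)

lemma clopens_symdiff: "U \<in> clopens X \<Longrightarrow> V \<in> clopens X \<Longrightarrow> symdiff U V \<in> clopens X"
  by (simp add: symdiff_def clopens_Un clopens_Diff)

lemma clopens_Union_finite: "finite F \<Longrightarrow> F \<subseteq> clopens X \<Longrightarrow> \<Union>F \<in> clopens X"
  by (induction F rule: finite_induct) (auto simp: clopens_empty clopens_Un)

lemma clopens_Inter_finite: "finite F \<Longrightarrow> F \<subseteq> clopens X \<Longrightarrow> topspace X \<inter> \<Inter>F \<in> clopens X"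
  by (induction F rule: finite_induct) (auto simp: clopens_topspace Int_left_commute clopens_Int)

lemma compactin_clopen_cover:
  assumes "compactin X K" and "\<And>x. x \<in> K \<Longrightarrow> \<exists>U\<in>clopens X. x \<in> U \<and> U \<inter> C = {}"
  shows "\<exists>U\<in>clopens X. K \<subseteq> U \<and> U \<inter> C = {}"
proof -
  define \<C> where "\<C> = {U \<in> clopens X. U \<inter> C = {}}"
  have "K \<subseteq> \<Union>\<C>" and "\<forall>U\<in>\<C>. openin X U"
    using assms(2) by (auto simp: \<C>_def clopens_def)
  then obtain F where F: "finite F" "F \<subseteq> \<C>" "K \<subseteq> \<Union>F"
    using assms(1) unfolding compactin_def by meson
  then have "\<Union>F \<in> clopens X"
    by (intro clopens_Union_finite) (auto simp: \<C>_def)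
  moreover have "\<Union>F \<inter> C = {}"
    using F(2) by (auto simp: \<C>_def)
  ultimately show ?thesis using F(3) by blast
qed

subsection \<open>Separation in Stone spaces\<close>

lemma stone_space_separate_points:
  assumes "stone_space X" "x \<in> topspace X" "z \<in> topspace X" "x \<noteq> z"
  shows "\<exists>U\<in>clopens X. z \<in> U \<and> x \<notin> U"
proof -
  obtain V W where "openin X V" "openin X W" "z \<in> V" "x \<in> W" "disjnt V W"
    using assms unfolding stone_space_def Hausdorff_space_def by metis
  moreover obtain U where "U \<in> clopens X" "z \<in> U" "U \<subseteq> V"
    using assms(1) \<open>openin X V\<close> \<open>z \<in> V\<close> unfolding stone_space_def by metis
  ultimately show ?thesis by (auto simp: disjnt_def)
qed

lemma stone_space_separate_point_compactin:
  assumes "stone_space X" "compactin X K" "x \<in> topspace X" "x \<notin> K"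
  shows "\<exists>U\<in>clopens X. x \<in> U \<and> U \<inter> K = {}"
proof -
  have "\<exists>U\<in>clopens X. z \<in> U \<and> U \<inter> {x} = {}" if "z \<in> K" for z
    using stone_space_separate_points[OF assms(1,3), of z] that assms(2,4)
    by (auto dest: compactin_subset_topspace)
  then obtain U where "U \<in> clopens X" "K \<subseteq> U" "x \<notin> U"
    using compactin_clopen_cover[OF assms(2)] by blast
  then show ?thesis
    using assms(3) by (intro bexI[of _ "topspace X - U"] clopens_topspace_Diff) auto
qed

lemma stone_space_separate_compactin:
  assumes "stone_space X" "compactin X K1" "compactin X K2" "K1 \<inter> K2 = {}"
  shows "\<exists>A\<in>clopens X. K1 \<subseteq> A \<and> A \<inter> K2 = {}"
proof (rule compactin_clopen_cover[OF assms(2)])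
  fix x assume "x \<in> K1"
  then have "x \<in> topspace X" "x \<notin> K2"
    using assms(2,4) compactin_subset_topspace by blast+
  then show "\<exists>U\<in>clopens X. x \<in> U \<and> U \<inter> K2 = {}"
    using stone_space_separate_point_compactin[OF assms(1,3)] by blast
qed

lemma ba_hom_clopens: "ba_hom X Y \<phi> \<Longrightarrow> U \<in> clopens X \<Longrightarrow> \<phi> U \<in> clopens Y"
  by (simp add: ba_hom_def)

lemma ba_hom_subset_topspace: "ba_hom X Y \<phi> \<Longrightarrow> U \<in> clopens X \<Longrightarrow> \<phi> U \<subseteq> topspace Y"
  by (simp add: ba_hom_clopens clopens_subset_topspace)

lemma ba_hom_topspace_Diff:
  "ba_hom X Y \<phi> \<Longrightarrow> U \<in> clopens X \<Longrightarrow> \<phi> (topspace X - U) = topspace Y - \<phi> U"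
  by (simp add: ba_hom_def)

lemma ba_hom_Un:
  "ba_hom X Y \<phi> \<Longrightarrow> U \<in> clopens X \<Longrightarrow> V \<in> clopens X \<Longrightarrow> \<phi> (U \<union> V) = \<phi> U \<union> \<phi> V"
  by (simp add: ba_hom_def)

lemma ba_hom_topspace:
  assumes "ba_hom X Y \<phi>" shows "\<phi> (topspace X) = topspace Y"
proof -
  have "\<phi> {} = topspace Y - \<phi> (topspace X)"
    using ba_hom_topspace_Diff[OF assms clopens_topspace] by simp
  moreover have "\<phi> (topspace X) = \<phi> (topspace X) \<union> \<phi> {}"
    using ba_hom_Un[OF assms clopens_topspace clopens_empty] by simp
  ultimately show ?thesis
    using ba_hom_subset_topspace[OF assms clopens_topspace] by blast
qed

lemma ba_hom_empty:
  assumes "ba_hom X Y \<phi>" shows "\<phi> {} = {}"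
  using ba_hom_topspace_Diff[OF assms clopens_topspace] by (simp add: ba_hom_topspace[OF assms])

lemma ba_hom_Int:
  assumes h: "ba_hom X Y \<phi>" and U: "U \<in> clopens X" and V: "V \<in> clopens X"
  shows "\<phi> (U \<inter> V) = \<phi> U \<inter> \<phi> V"
proof -
  let ?U' = "topspace X - U" and ?V' = "topspace X - V"
  have "U \<inter> V = topspace X - (?U' \<union> ?V')"
    using clopens_subset_topspace[OF U] clopens_subset_topspace[OF V] by blast
  then have "\<phi> (U \<inter> V) = topspace Y - \<phi> (?U' \<union> ?V')"
    using ba_hom_topspace_Diff[OF h clopens_Un] U V clopens_topspace_Diff by metis
  also have "\<dots> = topspace Y - (\<phi> ?U' \<union> \<phi> ?V')"
    using ba_hom_Un[OF h] U V clopens_topspace_Diff by metis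
  finally show ?thesis
    using ba_hom_subset_topspace[OF h] ba_hom_topspace_Diff[OF h U] ba_hom_topspace_Diff[OF h V] U V
    by blast
qed

lemma ba_hom_Inter_finite:
  assumes "ba_hom X Y \<phi>" "finite F" "F \<subseteq> clopens X"
  shows "\<phi> (topspace X \<inter> \<Inter>F) = topspace Y \<inter> \<Inter>(\<phi> ` F)"
  using assms(2,3)
proof (induction F rule: finite_induct)
  case empty
  then show ?case by (simp add: assms(1) ba_hom_topspace)
next
  case (insert U F)
  have "topspace X \<inter> \<Inter>(insert U F) = U \<inter> (topspace X \<inter> \<Inter>F)" by auto
  moreover have "topspace X \<inter> \<Inter>F \<in> clopens X"
    using insert.hyps(1) insert.prems by (simp add: clopens_Inter_finite)
  then have "\<phi> (U \<inter> (topspace X \<inter> \<Inter>F)) = \<phi> U \<inter> \<phi> (topspace X \<inter> \<Inter>F)"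
    using insert.prems ba_hom_Int[OF assms(1)] by simp
  ultimately show ?case
    using insert ba_hom_subset_topspace[OF assms(1), of U] by auto
qed

subsection \<open>The dual map of a homomorphism\<close>

text \<open>The point \<open>x\<close> is the intersection of the ultrafilter \<open>{U. y \<in> \<phi> U}\<close> of clopen sets.\<close>

lemma ba_hom_ultrafilter_point:
  assumes X: "compact_space X" and h: "ba_hom X Y \<phi>" and y: "y \<in> topspace Y"
  shows "\<exists>x\<in>topspace X. \<forall>U\<in>clopens X. x \<in> U \<longleftrightarrow> y \<in> \<phi> U"
proof -
  define \<U> where "\<U> = {U \<in> clopens X. y \<in> \<phi> U}"
  have "\<Inter>F \<noteq> {}" if F: "finite F" "F \<subseteq> \<U>" for F
  proof
    assume "\<Inter>F = {}"
    moreover have "F \<subseteq> clopens X" "\<forall>U\<in>F. y \<in> \<phi> U"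
      using F(2) by (auto simp: \<U>_def)
    then have "y \<in> \<phi> (topspace X \<inter> \<Inter>F)"
      using y ba_hom_Inter_finite[OF h F(1)] by simp
    ultimately show False by (simp add: ba_hom_empty[OF h])
  qed
  moreover have "\<forall>U\<in>\<U>. closedin X U"
    by (simp add: \<U>_def clopens_def)
  ultimately have "\<Inter>\<U> \<noteq> {}"
    using X[unfolded compact_space_fip, rule_format, of \<U>] by blast
  then obtain x where x: "x \<in> \<Inter>\<U>" by blast
  have "topspace X \<in> \<U>"
    using y by (simp add: \<U>_def clopens_topspace ba_hom_topspace[OF h])
  with x have "x \<in> topspace X" by blast
  moreover have "x \<in> U \<longleftrightarrow> y \<in> \<phi> U" if U: "U \<in> clopens X" for U
  proof
    assume "x \<in> U"
    then have "topspace X - U \<notin> \<U>" using x by blast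
    then show "y \<in> \<phi> U"
      using U y ba_hom_topspace_Diff[OF h U] clopens_topspace_Diff[OF U] by (auto simp: \<U>_def)
  next
    assume "y \<in> \<phi> U"
    then show "x \<in> U" using x U by (auto simp: \<U>_def)
  qed
  ultimately show ?thesis by blast
qed

lemma
  assumes "stone_space X" "ba_hom X Y \<phi>" "y \<in> topspace Y"
  shows stone_map_in_topspace: "stone_map X Y \<phi> y \<in> topspace X"
    and stone_map_mem_iff: "U \<in> clopens X \<Longrightarrow> stone_map X Y \<phi> y \<in> U \<longleftrightarrow> y \<in> \<phi> U"
proof -
  have "compact_space X" using assms(1) by (simp add: stone_space_def)
  then obtain x where x: "x \<in> topspace X" "\<forall>U\<in>clopens X. x \<in> U \<longleftrightarrow> y \<in> \<phi> U"
    using ba_hom_ultrafilter_point[OF _ assms(2,3)] by blast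
  moreover have uniq: "x' = x"
    if x': "x' \<in> topspace X" "\<forall>U\<in>clopens X. x' \<in> U \<longleftrightarrow> y \<in> \<phi> U" for x'
  proof (rule ccontr)
    assume "x' \<noteq> x"
    then obtain U where "U \<in> clopens X" "x \<in> U" "x' \<notin> U"
      using stone_space_separate_points[OF assms(1) x'(1) x(1)] by blast
    then show False using x(2) x'(2) by blast
  qed
  ultimately have "stone_map X Y \<phi> y = x"
    unfolding stone_map_def by (intro the_equality) (use uniq in blast)+
  with x show "stone_map X Y \<phi> y \<in> topspace X"
    and "U \<in> clopens X \<Longrightarrow> stone_map X Y \<phi> y \<in> U \<longleftrightarrow> y \<in> \<phi> U"
    by auto
qed

lemma stone_map_preimage_clopens:
  assumes "stone_space X" "ba_hom X Y \<phi>" "A \<in> clopens X"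
  shows "{y \<in> topspace Y. stone_map X Y \<phi> y \<in> A} = \<phi> A"
  using stone_map_mem_iff[OF assms(1,2) _ assms(3)] ba_hom_subset_topspace[OF assms(2,3)]
  by blast

lemma continuous_map_stone_map:
  assumes S: "stone_space X" and h: "ba_hom X Y \<phi>"
  shows "continuous_map Y X (stone_map X Y \<phi>)"
  unfolding continuous_map_def
proof (intro conjI allI impI)
  show "stone_map X Y \<phi> \<in> topspace Y \<rightarrow> topspace X"
    using stone_map_in_topspace[OF S h] by blast
  fix U assume U: "openin X U"
  let ?\<W> = "{W \<in> clopens X. W \<subseteq> U}"
  have "{y \<in> topspace Y. stone_map X Y \<phi> y \<in> U} = \<Union>(\<phi> ` ?\<W>)"
  proof (intro equalityI subsetI)
    fix y assume y: "y \<in> {y \<in> topspace Y. stone_map X Y \<phi> y \<in> U}"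
    then obtain W where "W \<in> clopens X" "stone_map X Y \<phi> y \<in> W" "W \<subseteq> U"
      using S U unfolding stone_space_def by blast
    then show "y \<in> \<Union>(\<phi> ` ?\<W>)"
      using stone_map_mem_iff[OF S h] y by blast
  next
    fix y assume "y \<in> \<Union>(\<phi> ` ?\<W>)"
    then obtain W where "W \<in> clopens X" "W \<subseteq> U" "y \<in> \<phi> W" by blast
    then show "y \<in> {y \<in> topspace Y. stone_map X Y \<phi> y \<in> U}"
      using stone_map_preimage_clopens[OF S h] by blast
  qed
  moreover have "openin Y (\<Union>(\<phi> ` ?\<W>))"
    using ba_hom_clopens[OF h] by (auto simp: clopens_def)
  ultimately show "openin Y {y \<in> topspace Y. stone_map X Y \<phi> y \<in> U}" by simp
qed

lemma space_borel_of: "space (borel_of X) = topspace X"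
  unfolding borel_of_def by (simp add: space_measure_of_conv)

lemma openin_in_borel_of: "openin X U \<Longrightarrow> U \<in> sets (borel_of X)"
  unfolding borel_of_def by (rule in_measure_of) (auto dest: openin_subset)

lemma closedin_in_borel_of:
  assumes "closedin X C" shows "C \<in> sets (borel_of X)"
proof -
  have "topspace X - (topspace X - C) \<in> sets (borel_of X)"
    using sets.compl_sets[OF openin_in_borel_of[of X "topspace X - C"]] assms
    by (simp add: space_borel_of openin_diff)
  then show ?thesis using closedin_subset[OF assms] by (simp add: double_diff)
qed

lemma clopens_in_borel_of: "U \<in> clopens X \<Longrightarrow> U \<in> sets (borel_of X)"
  by (simp add: clopens_def openin_in_borel_of)

lemma continuous_map_measurable_borel_of:
  assumes "continuous_map Y X f" shows "f \<in> borel_of Y \<rightarrow>\<^sub>M borel_of X"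
  unfolding borel_of_def[of X]
proof (rule measurable_measure_of)
  show "Collect (openin X) \<subseteq> Pow (topspace X)" by (auto dest: openin_subset)
  show "f \<in> space (borel_of Y) \<rightarrow> topspace X"
    using assms by (simp add: space_borel_of continuous_map_def)
  fix U assume "U \<in> Collect (openin X)"
  then have "openin Y {y \<in> topspace Y. f y \<in> U}" using assms by (simp add: continuous_map_def)
  moreover have "f -` U \<inter> space (borel_of Y) = {y \<in> topspace Y. f y \<in> U}"
    by (auto simp: space_borel_of)
  ultimately show "f -` U \<inter> space (borel_of Y) \<in> sets (borel_of Y)"
    by (simp add: openin_in_borel_of)
qed

lemma continuous_map_preimage_borel_of:
  assumes "continuous_map Y X f" "B \<in> sets (borel_of X)"
  shows "{y \<in> topspace Y. f y \<in> B} \<in> sets (borel_of Y)"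
proof -
  have "f -` B \<inter> space (borel_of Y) = {y \<in> topspace Y. f y \<in> B}"
    by (auto simp: space_borel_of)
  then show ?thesis
    using measurable_sets[OF continuous_map_measurable_borel_of[OF assms(1)] assms(2)] by simp
qed

lemma (in finite_measure) bdd_above_measure_image: "bdd_above ((\<lambda>i. measure M (A i)) ` I)"
  using bounded_measure by (intro bdd_aboveI[where M = "measure M (space M)"]) auto

lemma radon_extension_inner_compactin:
  assumes R: "radon_extension Y \<mu> M" and E: "E \<in> sets M" and e: "e > 0"
  obtains K where "compactin Y K" "K \<subseteq> E" "measure M E < measure M K + e"
proof -
  let ?\<K> = "{K. compactin Y K \<and> K \<subseteq> E}"
  have ne: "?\<K> \<noteq> {}" by blast
  have bdd: "bdd_above ((\<lambda>K. measure M K) ` ?\<K>)"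
    using R finite_measure.bdd_above_measure_image[of M "\<lambda>K. K" ?\<K>]
    unfolding radon_extension_def by simp
  have "measure M E - e < (SUP K\<in>?\<K>. measure M K)"
    using R E e unfolding radon_extension_def by simp
  then obtain K where "K \<in> ?\<K>" "measure M E - e < measure M K"
    unfolding less_cSUP_iff[OF ne bdd] by blast
  then show thesis by (intro that[of K]) auto
qed

lemma d_hom_upper:
  assumes R: "radon_extension Y \<mu> M" and h: "ba_hom X Y \<phi>" "ba_hom X Y \<psi>"
    and A: "A \<in> clopens X"
  shows "\<mu> (symdiff (\<phi> A) (\<psi> A)) \<le> d_hom X \<mu> \<phi> \<psi>"
proof -
  have "(\<lambda>U. \<mu> (symdiff (\<phi> U) (\<psi> U))) ` clopens X
      = (\<lambda>U. measure M (symdiff (\<phi> U) (\<psi> U))) ` clopens X"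
    using R h by (intro image_cong) (simp_all add: radon_extension_def ba_hom_clopens clopens_symdiff)
  moreover have "finite_measure M" using R by (simp add: radon_extension_def)
  ultimately have "bdd_above ((\<lambda>U. \<mu> (symdiff (\<phi> U) (\<psi> U))) ` clopens X)"
    by (simp add: finite_measure.bdd_above_measure_image)
  with A show ?thesis unfolding d_hom_def by (rule cSUP_upper)
qed

lemma measure_symdiff_stone_preimage_clopens:
  assumes "stone_space X" "radon_extension Y \<mu> M" "ba_hom X Y \<phi>" "ba_hom X Y \<psi>"
    and "A \<in> clopens X"
  shows "measure M (symdiff {y \<in> topspace Y. stone_map X Y \<phi> y \<in> A}
                            {y \<in> topspace Y. stone_map X Y \<psi> y \<in> A})
       = \<mu> (symdiff (\<phi> A) (\<psi> A))"
  using assms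
  by (simp add: stone_map_preimage_clopens radon_extension_def ba_hom_clopens clopens_symdiff)

lemma measure_compactin_stone_preimage_le_d_hom:
  assumes S: "stone_space X" and HY: "Hausdorff_space Y" and R: "radon_extension Y \<mu> M"
    and h: "ba_hom X Y \<phi>" "ba_hom X Y \<psi>"
    and K: "compactin Y K"
      "K \<subseteq> {y \<in> topspace Y. stone_map X Y \<phi> y \<in> B} - {y \<in> topspace Y. stone_map X Y \<psi> y \<in> B}"
    and L: "compactin Y L"
      "L \<subseteq> {y \<in> topspace Y. stone_map X Y \<psi> y \<in> B} - {y \<in> topspace Y. stone_map X Y \<phi> y \<in> B}"
  shows "measure M K + measure M L \<le> d_hom X \<mu> \<phi> \<psi>"
proof -
  let ?f = "stone_map X Y \<phi>" and ?g = "stone_map X Y \<psi>"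
  have fm: "finite_measure M" and sM: "sets M = sets (borel_of Y)"
    using R by (auto simp: radon_extension_def)
  have "compactin X (?f ` K \<union> ?g ` L)" "compactin X (?g ` K \<union> ?f ` L)"
    using K(1) L(1) continuous_map_stone_map[OF S] h by (auto intro: compactin_Un image_compactin)
  moreover have "?f ` K \<union> ?g ` L \<subseteq> B" "(?g ` K \<union> ?f ` L) \<inter> B = {}"
    using K(2) L(2) by auto
  then have "(?f ` K \<union> ?g ` L) \<inter> (?g ` K \<union> ?f ` L) = {}" by blast
  ultimately obtain A where A: "A \<in> clopens X" "?f ` K \<union> ?g ` L \<subseteq> A"
    "A \<inter> (?g ` K \<union> ?f ` L) = {}"
    using stone_space_separate_compactin[OF S] by meson
  have KL: "K \<union> L \<subseteq> symdiff (\<phi> A) (\<psi> A)"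
  proof
    fix y assume "y \<in> K \<union> L"
    then have "y \<in> topspace Y" "?f y \<in> A \<longleftrightarrow> ?g y \<notin> A"
      using A(2,3) K(2) L(2) by auto
    then show "y \<in> symdiff (\<phi> A) (\<psi> A)"
      using h by (auto simp: symdiff_def stone_map_preimage_clopens[OF S _ A(1), symmetric])
  qed
  have "K \<in> sets M" "L \<in> sets M"
    using K(1) L(1) HY by (simp_all add: sM compactin_imp_closedin closedin_in_borel_of)
  moreover have "K \<inter> L = {}" using K(2) L(2) by auto
  ultimately have "measure M K + measure M L = measure M (K \<union> L)"
    by (simp add: finite_measure.finite_measure_Union[OF fm])
  also have "\<dots> \<le> measure M (symdiff (\<phi> A) (\<psi> A))"
    using KL A(1) h
    by (intro finite_measure.finite_measure_mono[OF fm])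
       (simp_all add: sM ba_hom_clopens clopens_symdiff clopens_in_borel_of)
  also have "\<dots> = \<mu> (symdiff (\<phi> A) (\<psi> A))"
    using R A(1) h by (simp add: radon_extension_def ba_hom_clopens clopens_symdiff)
  also have "\<dots> \<le> d_hom X \<mu> \<phi> \<psi>"
    using d_hom_upper[OF R h A(1)] .
  finally show ?thesis .
qed

lemma measure_symdiff_stone_preimage_le_d_hom:
  assumes S: "stone_space X" and HY: "Hausdorff_space Y" and R: "radon_extension Y \<mu> M"
    and h: "ba_hom X Y \<phi>" "ba_hom X Y \<psi>" and B: "B \<in> sets (borel_of X)"
  shows "measure M (symdiff {y \<in> topspace Y. stone_map X Y \<phi> y \<in> B}
                            {y \<in> topspace Y. stone_map X Y \<psi> y \<in> B})
       \<le> d_hom X \<mu> \<phi> \<psi>"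
proof -
  let ?f = "stone_map X Y \<phi>" and ?g = "stone_map X Y \<psi>"
  define P where "P = {y \<in> topspace Y. ?f y \<in> B} - {y \<in> topspace Y. ?g y \<in> B}"
  define Q where "Q = {y \<in> topspace Y. ?g y \<in> B} - {y \<in> topspace Y. ?f y \<in> B}"
  have fm: "finite_measure M" and sM: "sets M = sets (borel_of Y)"
    using R by (auto simp: radon_extension_def)
  have "P \<in> sets M" "Q \<in> sets M"
    unfolding P_def Q_def sM
    using continuous_map_preimage_borel_of[OF continuous_map_stone_map[OF S] B] h
    by auto
  moreover have "P \<inter> Q = {}" by (auto simp: P_def Q_def)
  ultimately have PQ: "measure M (symdiff {y \<in> topspace Y. ?f y \<in> B} {y \<in> topspace Y. ?g y \<in> B})
                   = measure M P + measure M Q"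
    by (simp add: symdiff_def P_def[symmetric] Q_def[symmetric] finite_measure.finite_measure_Union[OF fm])
  show ?thesis
    unfolding PQ
  proof (rule field_le_epsilon)
    fix e :: real assume "e > 0"
    then have "e / 2 > 0" by simp
    obtain K where K: "compactin Y K" "K \<subseteq> P" "measure M P < measure M K + e / 2"
      using radon_extension_inner_compactin[OF R \<open>P \<in> sets M\<close> \<open>e / 2 > 0\<close>] .
    obtain L where L: "compactin Y L" "L \<subseteq> Q" "measure M Q < measure M L + e / 2"
      using radon_extension_inner_compactin[OF R \<open>Q \<in> sets M\<close> \<open>e / 2 > 0\<close>] .
    have "measure M K + measure M L \<le> d_hom X \<mu> \<phi> \<psi>"
      using K(1,2) L(1,2) unfolding P_def Q_def
      by (rule measure_compactin_stone_preimage_le_d_hom[OF S HY R h])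
    then show "measure M P + measure M Q \<le> d_hom X \<mu> \<phi> \<psi> + e"
      using K(3) L(3) by linarith
  qed
qed

theorem lemma4p6:
  fixes X :: "'a topology" and Y :: "'b topology"
    and \<mu> :: "'b set \<Rightarrow> real" and M :: "'b measure"
    and \<phi> \<psi> :: "'a set \<Rightarrow> 'b set"
  assumes "stone_space X" and "stone_space Y"
    and "metric_ba_measure Y \<mu>"
    and "radon_extension Y \<mu> M"
    and "ba_hom X Y \<phi>" and "ba_hom X Y \<psi>"
  shows "d_hom X \<mu> \<phi> \<psi> = d_hom_Bor X Y M \<phi> \<psi>"
proof (rule antisym)
  have "bdd_above ((\<lambda>B. measure M (symdiff {y \<in> topspace Y. stone_map X Y \<phi> y \<in> B}
                                            {y \<in> topspace Y. stone_map X Y \<psi> y \<in> B}))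
                   ` sets (borel_of X))"
    using assms(4) by (simp add: radon_extension_def finite_measure.bdd_above_measure_image)
  then show "d_hom X \<mu> \<phi> \<psi> \<le> d_hom_Bor X Y M \<phi> \<psi>"
    unfolding d_hom_def d_hom_Bor_def
  proof (rule cSUP_subset_mono[rotated])
    show "clopens X \<noteq> {}" "clopens X \<subseteq> sets (borel_of X)"
      using clopens_empty clopens_in_borel_of by blast+
    fix A assume "A \<in> clopens X"
    then show "\<mu> (symdiff (\<phi> A) (\<psi> A))
             \<le> measure M (symdiff {y \<in> topspace Y. stone_map X Y \<phi> y \<in> A}
                                   {y \<in> topspace Y. stone_map X Y \<psi> y \<in> A})"
      using measure_symdiff_stone_preimage_clopens[OF assms(1,4-6)] by simp
  qed
  have "Hausdorff_space Y" using assms(2) by (simp add: stone_space_def)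
  then show "d_hom_Bor X Y M \<phi> \<psi> \<le> d_hom X \<mu> \<phi> \<psi>"
    unfolding d_hom_Bor_def
    using sets.empty_sets measure_symdiff_stone_preimage_le_d_hom[OF assms(1) _ assms(4-6)]
    by (intro cSUP_least) blast+
qed

end
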